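(* There exist an absolute constant $C>0$ and infinitely many positive integers $n$ such that for each such $n$ there is an undirected, unweighted graph $G$ on $n$ vertices with maximum degree $3$ for which every hub labeling $\{S_v\}_{v\in V(G)}$ of $G$ satisfies $$\frac{1}{n}\sum_{v\in V(G)}|S_v|\;\ge\;\frac{n}{2^{C\sqrt{\log n}}}.$$
   Context: For an undirected unweighted graph $G=(V,E)$, a hub labeling is a family of sets $S_v\subseteq V$, $v\in V$, such that for every pair $u,v\in V$ at finite distance there is a vertex $w\in S_u\cap S_v$ lying on some shortest $u$–$v$ path, i.e. $\mathrm{dist}(u,w)+\mathrm{dist}(w,v)=\mathrm{dist}(u,v)$. Its average size is $\frac1n\sum_v|S_v|$. *)

theory Defs
  imports "HOL-Analysis.Analysis"
begin

definition simple_graph :: "nat \<Rightarrow> (nat \<Rightarrow> nat \<Rightarrow> bool) \<Rightarrow> bool" where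
  "simple_graph n E \<longleftrightarrow>
     (\<forall>u v. E u v \<longrightarrow> u < n \<and> v < n) \<and> (\<forall>u v. E u v \<longrightarrow> E v u) \<and> (\<forall>u. \<not> E u u)"

definition degree :: "nat \<Rightarrow> (nat \<Rightarrow> nat \<Rightarrow> bool) \<Rightarrow> nat \<Rightarrow> nat" where
  "degree n E v = card {u. u < n \<and> E v u}"

definition max_degree :: "nat \<Rightarrow> (nat \<Rightarrow> nat \<Rightarrow> bool) \<Rightarrow> nat" where
  "max_degree n E = Max (degree n E ` {0..<n})"

definition has_walk :: "nat \<Rightarrow> (nat \<Rightarrow> nat \<Rightarrow> bool) \<Rightarrow> nat \<Rightarrow> nat \<Rightarrow> nat \<Rightarrow> bool" where
  "has_walk n E k u v \<longleftrightarrow>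
     (\<exists>p :: nat \<Rightarrow> nat. p 0 = u \<and> p k = v \<and> (\<forall>i\<le>k. p i < n) \<and> (\<forall>i<k. E (p i) (p (Suc i))))"

definition reachable :: "nat \<Rightarrow> (nat \<Rightarrow> nat \<Rightarrow> bool) \<Rightarrow> nat \<Rightarrow> nat \<Rightarrow> bool" where
  "reachable n E u v \<longleftrightarrow> (\<exists>k. has_walk n E k u v)"

text \<open>Graph distance (meaningful only when reachable).\<close>
definition gdist :: "nat \<Rightarrow> (nat \<Rightarrow> nat \<Rightarrow> bool) \<Rightarrow> nat \<Rightarrow> nat \<Rightarrow> nat" where
  "gdist n E u v = (LEAST k. has_walk n E k u v)"

definition hub_labeling :: "nat \<Rightarrow> (nat \<Rightarrow> nat \<Rightarrow> bool) \<Rightarrow> (nat \<Rightarrow> nat set) \<Rightarrow> bool" where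
  "hub_labeling n E S \<longleftrightarrow>
     (\<forall>v<n. S v \<subseteq> {0..<n}) \<and>
     (\<forall>u<n. \<forall>v<n. reachable n E u v \<longrightarrow>
        (\<exists>w \<in> S u \<inter> S v. reachable n E u w \<and> reachable n E w v \<and>
            gdist n E u w + gdist n E w v = gdist n E u v))"

end

theory Submission
  imports Defs "HOL-Library.FuncSet"
begin

text \<open>For \<open>k \<ge> 1\<close> and \<open>T = 2^k\<close> we build a layered graph: every grid point \<open>p \<in> [3T]^k\<close> of each
  layer \<open>l \<le> 2k\<close> carries an out-spine and an in-spine of length \<open>T\<close>, and for each weight \<open>t < T\<close>
  a link path of length \<open>M + 2t\<^sup>2 - 2t - 1\<close> joins the \<open>t\<close>-th out-spine vertex of \<open>p\<close> in layer \<open>l\<close>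
  to the \<open>t\<close>-th in-spine vertex of \<open>p + t e\<^sub>l \<^sub>m\<^sub>o\<^sub>d \<^sub>k\<close> in layer \<open>l + 1\<close>.
  Fix \<open>x, a \<in> [T]^k\<close>. Because the link lengths are strictly convex in \<open>t\<close>, a potential that is
  1-Lipschitz along edges certifies that the walk from \<open>x\<close> in layer 0 to \<open>x + 2a\<close> in layer \<open>2k\<close>
  using weight \<open>a\<^sub>l \<^sub>m\<^sub>o\<^sub>d \<^sub>k\<close> in every layer \<open>l\<close> is a shortest path, and that every shortest path
  stays on it. So the common hub of this pair lies on that canonical path. A hub in a layer
  \<open>\<ge> k\<close> determines \<open>a\<close> once \<open>x\<close> is known; a hub in a layer \<open>< k\<close> determines \<open>(x, a)\<close> once \<open>x + 2a\<close>
  is known. Hence the \<open>T^{2k} = 2^{2k\<^sup>2}\<close> pairs inject into the pairs \<open>(v, h)\<close> with \<open>h \<in> S v\<close>,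
  while the graph has \<open>n = 2^{k\<^sup>2 + O(k)}\<close> vertices; so the average label size is at least
  \<open>n / 2^{O(k)} = n / 2^{O(\<surd>log n)}\<close>.\<close>

lemma mixed_radix_eqD:
  fixes a a' b b' m :: nat
  assumes "a < m" "a' < m" "a + m * b = a' + m * b'"
  shows "a = a' \<and> b = b'"
proof -
  have "a = (a + m * b) mod m" "a' = (a' + m * b') mod m"
    using assms(1,2) by simp_all
  hence "a = a'" using assms(3) by simp
  with assms show ?thesis by simp
qed

lemma mixed_radix_less:
  fixes a b c m :: nat
  assumes "a < m" "b < c"
  shows "a + m * b < m * c"
proof -
  have "m * (b + 1) \<le> m * c" using assms(2) by (intro mult_le_mono2) simp
  thus ?thesis using assms(1) by simp
qed

lemma digits_sum_less:
  fixes p :: "nat \<Rightarrow> nat"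
  shows "(\<And>j. j < K \<Longrightarrow> p j < Q) \<Longrightarrow> (\<Sum>j<K. p j * Q ^ j) < Q ^ K"
proof (induction K)
  case (Suc K)
  have "(\<Sum>j<Suc K. p j * Q ^ j) = (\<Sum>j<K. p j * Q ^ j) + Q ^ K * p K" by simp
  also have "\<dots> < Q ^ K * Q" using Suc by (intro mixed_radix_less) auto
  finally show ?case by (simp add: mult.commute)
qed simp

lemma digits_sum_inj:
  fixes p q :: "nat \<Rightarrow> nat"
  shows "(\<And>j. j < K \<Longrightarrow> p j < Q \<and> q j < Q) \<Longrightarrow> (\<Sum>j<K. p j * Q ^ j) = (\<Sum>j<K. q j * Q ^ j)
    \<Longrightarrow> j < K \<Longrightarrow> p j = q j"
proof (induction K arbitrary: j)
  case (Suc K)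
  have "(\<Sum>j<K. p j * Q ^ j) + Q ^ K * p K = (\<Sum>j<K. q j * Q ^ j) + Q ^ K * q K"
    using Suc.prems(2) by (simp add: mult.commute)
  moreover have "(\<Sum>j<K. p j * Q ^ j) < Q ^ K" "(\<Sum>j<K. q j * Q ^ j) < Q ^ K"
    using Suc.prems(1) by (auto intro!: digits_sum_less)
  ultimately have sums: "(\<Sum>j<K. p j * Q ^ j) = (\<Sum>j<K. q j * Q ^ j)" and "p K = q K"
    using mixed_radix_eqD by blast+
  show ?case
  proof (cases "j = K")
    case False
    with Suc.prems(3) have "j < K" by simp
    with Suc.IH[OF _ sums] Suc.prems(1) show ?thesis by simp
  qed (use \<open>p K = q K\<close> in simp)
qed simp

lemma has_walk_0: "u < n \<Longrightarrow> has_walk n E 0 u u"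
  unfolding has_walk_def by (intro exI[of _ "\<lambda>_. u"]) simp

lemma has_walk_1: "E u v \<Longrightarrow> u < n \<Longrightarrow> v < n \<Longrightarrow> has_walk n E 1 u v"
  unfolding has_walk_def by (intro exI[of _ "\<lambda>i. if i = 0 then u else v"]) (auto simp: le_Suc_eq)

lemma has_walk_append:
  assumes "has_walk n E k1 u v" "has_walk n E k2 v w"
  shows "has_walk n E (k1 + k2) u w"
proof -
  obtain p1 where p1: "p1 0 = u" "p1 k1 = v" "\<forall>i\<le>k1. p1 i < n" "\<forall>i<k1. E (p1 i) (p1 (Suc i))"
    using assms(1) unfolding has_walk_def by blast
  obtain p2 where p2: "p2 0 = v" "p2 k2 = w" "\<forall>i\<le>k2. p2 i < n" "\<forall>i<k2. E (p2 i) (p2 (Suc i))"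
    using assms(2) unfolding has_walk_def by blast
  define p where "p i = (if i \<le> k1 then p1 i else p2 (i - k1))" for i
  have "E (p i) (p (Suc i))" if "i < k1 + k2" for i
  proof (cases "i < k1")
    case False
    hence "Suc i - k1 = Suc (i - k1)" by simp
    thus ?thesis using False p1 p2 that by (auto simp: p_def)
  qed (use p1 in \<open>auto simp: p_def\<close>)
  moreover have "p 0 = u" "p (k1 + k2) = w" "\<forall>i\<le>k1+k2. p i < n"
    using p1 p2 by (auto simp: p_def)
  ultimately show ?thesis unfolding has_walk_def by blast
qed

context
  fixes n :: nat and E :: "nat \<Rightarrow> nat \<Rightarrow> bool" and f :: "nat \<Rightarrow> int"
  assumes potential_lipschitz: "\<And>u v. E u v \<Longrightarrow> f v \<le> f u + 1"
begin

lemma walk_potential_le: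
  assumes "\<forall>i<m. E (p i) (p (Suc i))" "i \<le> j" "j \<le> m"
  shows "f (p j) \<le> f (p i) + int (j - i)"
  using assms(2,3)
proof (induction j)
  case (Suc j)
  show ?case
  proof (cases "i = Suc j")
    case False
    hence "f (p j) \<le> f (p i) + int (j - i)" "i \<le> j" using Suc by simp_all
    moreover have "f (p (Suc j)) \<le> f (p j) + 1"
      using potential_lipschitz assms(1) Suc.prems by simp
    ultimately show ?thesis by simp
  qed simp
qed simp

lemma has_walk_potential_le: "has_walk n E d u v \<Longrightarrow> f v \<le> f u + int d"
  unfolding has_walk_def using walk_potential_le[of d _ 0 d] by fastforce

lemma gdist_eq_potential_gap:
  assumes "has_walk n E d u v" "int d = f v - f u"
  shows "gdist n E u v = d"
  unfolding gdist_def
proof (rule Least_equality)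
  fix d' assume "has_walk n E d' u v"
  from has_walk_potential_le[OF this] assms(2) show "d \<le> d'" by simp
qed fact

lemma hub_on_potential_geodesic:
  assumes S: "hub_labeling n E S" and uv: "u < n" "v < n"
    and walk: "has_walk n E d u v" "int d = f v - f u"
  obtains w p m where "w \<in> S u" "w \<in> S v" "p 0 = u" "p m = w" "\<forall>i<m. E (p i) (p (Suc i))"
    "\<And>i. i \<le> m \<Longrightarrow> f (p i) = f u + int i"
proof -
  have "reachable n E u v" using walk(1) unfolding reachable_def by blast
  then obtain w where w: "w \<in> S u" "w \<in> S v" "reachable n E u w" "reachable n E w v"
    "gdist n E u w + gdist n E w v = gdist n E u v"
    using S uv unfolding hub_labeling_def by blast
  define m where "m = gdist n E u w"
  have uw: "has_walk n E m u w" and wv: "has_walk n E (gdist n E w v) w v"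
    using w(3,4) unfolding reachable_def gdist_def m_def by (auto intro: LeastI_ex)
  have "f w = f u + int m"
    using has_walk_potential_le[OF uw] has_walk_potential_le[OF wv] w(5)
      gdist_eq_potential_gap[OF walk] walk(2) unfolding m_def by linarith
  moreover obtain p where p: "p 0 = u" "p m = w" "\<forall>i<m. E (p i) (p (Suc i))"
    using uw unfolding has_walk_def by blast
  ultimately have "f (p i) = f u + int i" if "i \<le> m" for i
    using walk_potential_le[OF p(3), of 0 i] walk_potential_le[OF p(3), of i m] p(1,2) that by simp
  with w(1,2) p show ?thesis using that by blast
qed

end

text \<open>\<open>Out l p s\<close> and \<open>In l p s\<close> are the \<open>s\<close>-th vertices of the out- and in-spine of grid point
  \<open>p\<close> in layer \<open>l\<close>; \<open>Link l p t i\<close> is the \<open>i\<close>-th inner vertex of the link of weight \<open>t\<close> leaving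
  \<open>Out l p t\<close>.\<close>

datatype vertex =
  Out nat "nat \<Rightarrow> nat" nat
| In nat "nat \<Rightarrow> nat" nat
| Link nat "nat \<Rightarrow> nat" nat nat

locale layered_graph =
  fixes k :: nat
  assumes k_pos: "1 \<le> k"
begin

definition "T = (2::nat) ^ k"
definition "Q = 3 * T"
definition "M = 2 * T\<^sup>2 + 4"
definition "W = M + 2 * T\<^sup>2"
definition "L = 2 * k + 1"
definition "N = 3 * L * Q ^ k * T * W"

definition link_len :: "nat \<Rightarrow> nat" where
  "link_len t = M + 2 * t * t - 2 * t - 1"

definition box :: "nat \<Rightarrow> (nat \<Rightarrow> nat) set" where
  "box b = PiE {..<k} (\<lambda>_. {..<b})"

definition advance :: "nat \<Rightarrow> (nat \<Rightarrow> nat) \<Rightarrow> nat \<Rightarrow> (nat \<Rightarrow> nat)" where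
  "advance l p t = p(l mod k := p (l mod k) + t)"

definition link_ok :: "nat \<Rightarrow> (nat \<Rightarrow> nat) \<Rightarrow> nat \<Rightarrow> bool" where
  "link_ok l p t \<longleftrightarrow> l < 2 * k \<and> p \<in> box Q \<and> t < T \<and> p (l mod k) + t < Q"

fun valid :: "vertex \<Rightarrow> bool" where
  "valid (Out l p s) \<longleftrightarrow> l < 2 * k \<and> p \<in> box Q \<and> s < T"
| "valid (In l p s) \<longleftrightarrow> 1 \<le> l \<and> l \<le> 2 * k \<and> p \<in> box Q \<and> s < T"
| "valid (Link l p t i) \<longleftrightarrow> link_ok l p t \<and> 1 \<le> i \<and> i < link_len t"

fun arc :: "vertex \<Rightarrow> vertex \<Rightarrow> bool" where
  "arc (Out l p s) (Out l' p' s') \<longleftrightarrow> l' = l \<and> p' = p \<and> s' = s + 1"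
| "arc (Out l p s) (Link l' p' t' i') \<longleftrightarrow> l' = l \<and> p' = p \<and> t' = s \<and> i' = 1"
| "arc (In l p s) (In l' p' s') \<longleftrightarrow> l' = l \<and> p' = p \<and> s' = s + 1"
| "arc (In l p s) (Out l' p' s') \<longleftrightarrow> s = 0 \<and> l' = l \<and> p' = p \<and> s' = 0"
| "arc (Link l p t i) (Link l' p' t' i') \<longleftrightarrow> l' = l \<and> p' = p \<and> t' = t \<and> i' = i + 1"
| "arc (Link l p t i) (In l' p' s') \<longleftrightarrow>
     i = link_len t - 1 \<and> l' = l + 1 \<and> p' = advance l p t \<and> s' = t"
| "arc _ _ = False"

definition adj :: "vertex \<Rightarrow> vertex \<Rightarrow> bool" where
  "adj x y \<longleftrightarrow> arc x y \<or> arc y x"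

definition box_code :: "(nat \<Rightarrow> nat) \<Rightarrow> nat" where
  "box_code p = (\<Sum>j<k. p j * Q ^ j)"

fun kind :: "vertex \<Rightarrow> nat" where
  "kind (Out _ _ _) = 0" | "kind (In _ _ _) = 1" | "kind (Link _ _ _ _) = 2"

fun layer :: "vertex \<Rightarrow> nat" where
  "layer (Out l _ _) = l" | "layer (In l _ _) = l" | "layer (Link l _ _ _) = l"

fun position :: "vertex \<Rightarrow> nat \<Rightarrow> nat" where
  "position (Out _ p _) = p" | "position (In _ p _) = p" | "position (Link _ p _ _) = p"

fun offset :: "vertex \<Rightarrow> nat" where
  "offset (Out _ _ s) = s" | "offset (In _ _ s) = s" | "offset (Link _ _ t i) = t + T * i"

definition enc :: "vertex \<Rightarrow> nat" where
  "enc x = 3 * (layer x + L * (box_code (position x) + Q ^ k * offset x)) + kind x"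

definition edge :: "nat \<Rightarrow> nat \<Rightarrow> bool" where
  "edge u v \<longleftrightarrow> (\<exists>x y. valid x \<and> valid y \<and> adj x y \<and> u = enc x \<and> v = enc y)"

lemma T_ge_2: "T \<ge> 2"
  using power_increasing[OF k_pos, of "2::nat"] unfolding T_def by simp

lemma link_len_ge_3: "link_len t \<ge> 3"
proof -
  have "2 * t \<le> 2 * t * t" by (cases t) auto
  thus ?thesis unfolding link_len_def M_def by arith
qed

lemma link_len_less_W: "t < T \<Longrightarrow> link_len t < W"
proof -
  assume "t < T"
  hence "2 * t * t < 2 * T\<^sup>2" by (simp add: mult_strict_mono power2_eq_square)
  thus ?thesis unfolding link_len_def W_def by simp
qed

lemma mod_k_less: "l mod k < k"
  using k_pos by simp

lemma box_mono: "b \<le> b' \<Longrightarrow> box b \<subseteq> box b'"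
  unfolding box_def by (rule PiE_mono) auto

lemma box_T_subset_box_Q: "box T \<subseteq> box Q"
  by (rule box_mono) (simp add: Q_def)

lemma box_less: "p \<in> box b \<Longrightarrow> j < k \<Longrightarrow> p j < b"
  unfolding box_def by auto

lemma box_code_less: "p \<in> box Q \<Longrightarrow> box_code p < Q ^ k"
  unfolding box_code_def by (rule digits_sum_less) (auto simp: box_less)

lemma box_code_inj: "p \<in> box Q \<Longrightarrow> q \<in> box Q \<Longrightarrow> box_code p = box_code q \<Longrightarrow> p = q"
  unfolding box_code_def box_def
  by (rule PiE_ext) (auto intro: digits_sum_inj[of k p Q q])

lemma enc_digits_eqD:
  assumes "l < L" "l' < L" "c < Q ^ k" "c' < Q ^ k"
    "l + L * (c + Q ^ k * d) = l' + L * (c' + Q ^ k * d')"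
  shows "l = l' \<and> c = c' \<and> d = d'"
  using mixed_radix_eqD[OF assms(1,2,5)] mixed_radix_eqD[OF assms(3,4)] by blast

lemma valid_digits_less:
  assumes "valid x"
  shows "layer x < L" "position x \<in> box Q" "offset x < T * W"
proof -
  have "1 \<le> W" unfolding W_def M_def by simp
  then show "layer x < L" "position x \<in> box Q" "offset x < T * W"
    using assms link_len_less_W
    by (cases x; force simp: L_def link_ok_def intro: mixed_radix_less less_le_trans)+
qed

lemma enc_less_N: "valid x \<Longrightarrow> enc x < N"
proof -
  assume v: "valid x"
  define d where "d = layer x + L * (box_code (position x) + Q ^ k * offset x)"
  define D where "D = L * (Q ^ k * (T * W))"
  have "box_code (position x) < Q ^ k"
    using box_code_less valid_digits_less(2)[OF v] .
  hence "box_code (position x) + Q ^ k * offset x < Q ^ k * (T * W)"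
    using valid_digits_less(3)[OF v] by (rule mixed_radix_less)
  hence "d < D"
    unfolding d_def D_def by (rule mixed_radix_less[OF valid_digits_less(1)[OF v]])
  moreover have "kind x < 3" by (cases x) simp_all
  moreover have "N = 3 * D" unfolding N_def D_def by (simp add: mult.assoc)
  ultimately show ?thesis unfolding enc_def d_def[symmetric] by linarith
qed

lemma enc_inj: "valid x \<Longrightarrow> valid y \<Longrightarrow> enc x = enc y \<Longrightarrow> x = y"
proof -
  assume vx: "valid x" and vy: "valid y" and e: "enc x = enc y"
  define dx where "dx = layer x + L * (box_code (position x) + Q ^ k * offset x)"
  define dy where "dy = layer y + L * (box_code (position y) + Q ^ k * offset y)"
  have "kind x < 3" "kind y < 3" by (cases x; cases y; simp)+
  moreover have "kind x + 3 * dx = kind y + 3 * dy"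
    using e unfolding enc_def dx_def dy_def by simp
  ultimately have "kind x = kind y" "dx = dy" using mixed_radix_eqD by blast+
  moreover note valid_digits_less[OF vx] valid_digits_less[OF vy]
  ultimately have "kind x = kind y" "layer x = layer y" "position x = position y"
    "offset x = offset y"
    unfolding dx_def dy_def using enc_digits_eqD box_code_less box_code_inj by metis+
  with vx vy show "x = y"
    by (cases x; cases y) (auto simp: link_ok_def dest: mixed_radix_eqD)
qed

lemma enc_inj_on: "inj_on enc {x. valid x}"
  by (rule inj_onI) (auto intro: enc_inj)

definition dec :: "nat \<Rightarrow> vertex" where
  "dec u = inv_into {x. valid x} enc u"

lemma dec_enc [simp]: "valid x \<Longrightarrow> dec (enc x) = x"
  unfolding dec_def by (rule inv_into_f_f[OF enc_inj_on]) simp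

lemma edge_dec:
  "edge u v \<Longrightarrow> valid (dec u) \<and> valid (dec v) \<and> u = enc (dec u) \<and> v = enc (dec v) \<and> adj (dec u) (dec v)"
  unfolding edge_def by auto

lemma edge_enc: "valid x \<Longrightarrow> valid y \<Longrightarrow> adj x y \<Longrightarrow> edge (enc x) (enc y)"
  unfolding edge_def by blast

lemma simple_graph_edge: "simple_graph N edge"
proof -
  have "\<not> edge u u" for u
  proof
    assume "edge u u"
    then obtain x y where "valid x" "valid y" "adj x y" "enc x = enc y"
      unfolding edge_def by auto
    moreover have "\<not> arc x x" for x by (cases x) auto
    ultimately show False using enc_inj unfolding adj_def by blast
  qed
  then show ?thesis
    unfolding simple_graph_def edge_def adj_def using enc_less_N by blast
qed

fun nbrs :: "vertex \<Rightarrow> vertex set" where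
  "nbrs (Out l p s) = {Out l p (s + 1), Link l p s 1, if s = 0 then In l p 0 else Out l p (s - 1)}"
| "nbrs (In l p s) = {In l p (s + 1), if s = 0 then Out l p 0 else In l p (s - 1),
     Link (l - 1) (p((l - 1) mod k := p ((l - 1) mod k) - s)) s (link_len s - 1)}"
| "nbrs (Link l p t i) = {if i = link_len t - 1 then In (l + 1) (advance l p t) t else Link l p t (i + 1),
     if i = 1 then Out l p t else Link l p t (i - 1)}"

lemma finite_nbrs: "finite (nbrs x)"
  by (cases x) auto

lemma card_nbrs_le_3: "card (nbrs x) \<le> 3"
  by (cases x) (auto simp: card_insert_if)

lemma adj_in_nbrs: "valid x \<Longrightarrow> valid y \<Longrightarrow> adj x y \<Longrightarrow> y \<in> nbrs x"
  by (cases x; cases y) (auto simp: adj_def advance_def)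

lemma degree_le_3: "degree N edge u \<le> 3"
proof -
  have "{v. v < N \<and> edge u v} \<subseteq> enc ` nbrs (dec u)"
    using edge_dec adj_in_nbrs by blast
  hence "degree N edge u \<le> card (enc ` nbrs (dec u))"
    unfolding degree_def by (intro card_mono) (simp_all add: finite_nbrs)
  also have "\<dots> \<le> 3"
    using card_image_le[OF finite_nbrs] card_nbrs_le_3 le_trans by blast
  finally show ?thesis .
qed

lemma max_degree_edge: "max_degree N edge = 3"
proof -
  define z where "z = restrict (\<lambda>_. 0::nat) {..<k}"
  have z: "z \<in> box Q" unfolding z_def box_def Q_def using T_ge_2 by auto
  have valid: "valid (Out 1 z 0)" "valid (Out 1 z 1)" "valid (In 1 z 0)" "valid (Link 1 z 0 1)"
    using k_pos z T_ge_2 link_len_ge_3[of 0] by (auto simp: link_ok_def z_def box_def Q_def)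
  let ?nb = "{enc (Out 1 z 1), enc (Link 1 z 0 1), enc (In 1 z 0)}"
  have "?nb \<subseteq> {v. v < N \<and> edge (enc (Out 1 z 0)) v}"
    using valid by (auto intro!: edge_enc enc_less_N simp: adj_def)
  moreover have "card ?nb = 3"
    using enc_inj[OF valid(2) valid(4)] enc_inj[OF valid(2) valid(3)] enc_inj[OF valid(4) valid(3)]
    by (auto simp: card_insert_if)
  ultimately have "3 \<le> degree N edge (enc (Out 1 z 0))"
    unfolding degree_def by (metis (no_types, lifting) card_mono finite_nat_set_iff_bounded mem_Collect_eq)
  moreover have "enc (Out 1 z 0) \<in> {0..<N}" using enc_less_N[OF valid(1)] by simp
  ultimately show ?thesis
    unfolding max_degree_def using degree_le_3 by (intro Max_eqI) (auto intro!: le_antisym)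
qed

definition weight :: "(nat \<Rightarrow> nat) \<Rightarrow> nat \<Rightarrow> nat" where
  "weight a l = a (l mod k)"

lemma weight_less: "a \<in> box T \<Longrightarrow> weight a l < T"
  unfolding weight_def using box_less mod_k_less by blast

text \<open>Across a link of weight \<open>t \<le> a\<^sub>l\<close> the potential of \<open>a\<close> gains the tangent at \<open>a\<^sub>l\<close> of the
  convex link length \<open>M + 2t\<^sup>2 - 2t - 1\<close>; so only the link of weight \<open>a\<^sub>l\<close> is crossed at unit speed.\<close>

definition base_pot :: "(nat \<Rightarrow> nat) \<Rightarrow> nat \<Rightarrow> (nat \<Rightarrow> nat) \<Rightarrow> int" where
  "base_pot a l p =
     4 * (\<Sum>j<k. int (a j) * int (p j)) + int l * int M - 2 * (\<Sum>m<l. int (weight a m) ^ 2)"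

definition link_start_pot :: "(nat \<Rightarrow> nat) \<Rightarrow> nat \<Rightarrow> (nat \<Rightarrow> nat) \<Rightarrow> nat \<Rightarrow> int" where
  "link_start_pot a l p t = base_pot a l p + 1 + int (min t (weight a l))"

definition link_end_pot :: "(nat \<Rightarrow> nat) \<Rightarrow> nat \<Rightarrow> (nat \<Rightarrow> nat) \<Rightarrow> nat \<Rightarrow> int" where
  "link_end_pot a l p t = base_pot a (l + 1) (advance l p t) - int (min t (weight a l))"

fun pot :: "(nat \<Rightarrow> nat) \<Rightarrow> vertex \<Rightarrow> int" where
  "pot a (Out l p s) = base_pot a l p + 1 + int (min s (weight a l))"
| "pot a (In l p s) = base_pot a l p - int (min s (weight a (l - 1)))"
| "pot a (Link l p t i) =
     max (link_start_pot a l p t - int i) (link_end_pot a l p t - (int (link_len t) - int i))"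

lemma pot_Out: "pot a (Out l p t) = link_start_pot a l p t"
  by (simp add: link_start_pot_def)

lemma pot_In: "pot a (In (l + 1) (advance l p t) t) = link_end_pot a l p t"
  by (simp add: link_end_pot_def)

lemma base_pot_advance:
  "base_pot a (l + 1) (advance l p t) - base_pot a l p =
     4 * int (weight a l) * int t + int M - 2 * int (weight a l) ^ 2"
proof -
  have "(\<Sum>j<k. int (a j) * int (advance l p t j)) =
        (\<Sum>j<k. int (a j) * int (p j) + (if j = l mod k then int (a (l mod k)) * int t else 0))"
    by (rule sum.cong) (auto simp: advance_def algebra_simps)
  also have "\<dots> = (\<Sum>j<k. int (a j) * int (p j)) + int (a (l mod k)) * int t"
    using mod_k_less by (simp add: sum.distrib)
  finally show ?thesis
    unfolding base_pot_def weight_def by (simp add: algebra_simps)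
qed

lemma link_len_int: "int (link_len t) = int M + 2 * int t * int t - 2 * int t - 1"
proof -
  have "2 * t \<le> 2 * t * t" by (cases t) auto
  moreover have "M \<ge> 1" unfolding M_def by simp
  ultimately have "link_len t + (2 * t + 1) = M + 2 * t * t" unfolding link_len_def by arith
  hence "int (link_len t + (2 * t + 1)) = int (M + 2 * t * t)" by simp
  thus ?thesis by simp
qed

lemma link_pot_gain:
  "link_end_pot a l p t - link_start_pot a l p t =
     4 * int (weight a l) * int t + int M - 2 * int (weight a l) ^ 2 - 2 * int (min t (weight a l)) - 1"
  using base_pot_advance[of a l p t] unfolding link_start_pot_def link_end_pot_def by simp

lemma link_slack:
  "int (link_len t) - (link_end_pot a l p t - link_start_pot a l p t) =
     2 * (int t - int (weight a l)) ^ 2 - 2 * (if t \<le> weight a l then 0 else int t - int (weight a l))"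
  using link_pot_gain[of a l p t] link_len_int[of t]
  by (auto simp: power2_eq_square algebra_simps min_def)

lemma link_slack_nonneg: "link_end_pot a l p t - link_start_pot a l p t \<le> int (link_len t)"
proof -
  define d where "d = int t - int (weight a l)"
  have "d \<le> d * d" if "d \<ge> 1" using that by (simp add: mult_le_cancel_left1)
  hence "2 * d ^ 2 - 2 * (if t \<le> weight a l then 0 else d) \<ge> 0"
    unfolding d_def by (auto simp: power2_eq_square)
  thus ?thesis using link_slack[of t a l p] unfolding d_def by simp
qed

lemma link_slack_eq_0_iff:
  "t \<le> weight a l \<Longrightarrow> link_end_pot a l p t - link_start_pot a l p t = int (link_len t) \<longleftrightarrow> t = weight a l"
  using link_slack[of t a l p] by (auto simp: power2_eq_square)

lemma link_pot_gain_lower: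
  assumes "t < T" "weight a l < T"
  shows "link_end_pot a l p t - link_start_pot a l p t + int (link_len t) \<ge> 2"
proof -
  let ?w = "int (weight a l)" and ?t = "int t" and ?T = "int T"
  have "link_end_pot a l p t - link_start_pot a l p t =
      4 * (?w * ?t) + int M - 2 * (?w * ?w) - 2 * int (min t (weight a l)) - 1"
    using link_pot_gain[of a l p t] by (simp add: power2_eq_square)
  moreover have "int (link_len t) = int M + 2 * (?t * ?t) - 2 * ?t - 1"
    using link_len_int[of t] by (simp add: algebra_simps)
  moreover have "int M = 2 * (?T * ?T) + 4" unfolding M_def by (simp add: power2_eq_square)
  moreover have "?w * ?w \<le> ?T * ?T" using assms by (intro mult_mono) auto
  moreover have "int (min t (weight a l)) \<le> ?T" "?t \<le> ?T" using assms by auto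
  moreover have "0 \<le> ?w * ?t" "0 \<le> ?t * ?t" by simp_all
  moreover have "0 \<le> ?T * ?T - 2 * ?T + 1"
    using zero_le_square[of "?T - 1"] by (simp add: algebra_simps)
  ultimately show ?thesis by linarith
qed

lemma link_len_minus_1: "int (link_len t - 1) = int (link_len t) - 1"
  using link_len_ge_3[of t] by simp

lemma pot_arc_lipschitz:
  assumes a: "a \<in> box T" and "valid x" "valid y" "arc x y"
  shows "\<bar>pot a y - pot a x\<bar> \<le> 1"
proof (cases x)
  case (Out l p s)
  show ?thesis
  proof (cases y)
    case (Link l' p' t' i')
    hence y: "y = Link l p s 1" using assms Out by auto
    have "s < T" using assms(2) Out by simp
    thus ?thesis
      using y Out pot_Out[of a l p s] link_slack_nonneg[of a l p s]
        link_pot_gain_lower[of s a l p] weight_less[OF a]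
      by (auto simp: max_def abs_le_iff)
  qed (use assms Out in \<open>auto simp: min_def\<close>)
next
  case (In l p s)
  show ?thesis
    by (cases y) (use assms In in \<open>auto simp: min_def\<close>)
next
  case (Link l p t i)
  have "t < T" using assms(2) Link by (simp add: link_ok_def)
  note gain = link_slack_nonneg[of a l p t] link_pot_gain_lower[of t a l p, OF this weight_less[OF a]]
  show ?thesis
  proof (cases y)
    case (Link l' p' t' i')
    thus ?thesis using assms \<open>x = Link l p t i\<close> by (auto simp: max_def abs_le_iff)
  next
    case (In l' p' s')
    hence "y = In (l + 1) (advance l p t) t" "i = link_len t - 1"
      using assms \<open>x = Link l p t i\<close> by auto
    thus ?thesis
      using Link pot_In[of a l p t] gain link_len_minus_1[of t] by (auto simp: max_def abs_le_iff)
  qed (use assms Link in auto)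
qed

lemma pot_lipschitz: "a \<in> box T \<Longrightarrow> edge u v \<Longrightarrow> pot a (dec v) \<le> pot a (dec u) + 1"
  using edge_dec pot_arc_lipschitz unfolding adj_def by fastforce

text \<open>Along the canonical path for \<open>x\<close> and \<open>a\<close>, the grid point in layer \<open>l\<close> is
  \<open>x + visits l \<cdot> a\<close>, where \<open>visits l j\<close> counts the layers \<open>m < l \<le> 2k\<close> with \<open>m mod k = j\<close>.\<close>

definition visits :: "nat \<Rightarrow> nat \<Rightarrow> nat" where
  "visits l j = (if j < l then 1 else 0) + (if j + k < l then 1 else 0)"

definition canon_pos :: "(nat \<Rightarrow> nat) \<Rightarrow> (nat \<Rightarrow> nat) \<Rightarrow> nat \<Rightarrow> nat \<Rightarrow> nat" where
  "canon_pos x a l = (\<lambda>j. if j < k then x j + visits l j * a j else undefined)"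

definition on_canon_path :: "(nat \<Rightarrow> nat) \<Rightarrow> (nat \<Rightarrow> nat) \<Rightarrow> vertex \<Rightarrow> bool" where
  "on_canon_path x a y \<longleftrightarrow>
     (\<exists>l s. y = Out l (canon_pos x a l) s \<and> l < 2 * k \<and> s \<le> weight a l) \<or>
     (\<exists>l i. y = Link l (canon_pos x a l) (weight a l) i \<and> l < 2 * k \<and> 1 \<le> i \<and> i < link_len (weight a l)) \<or>
     (\<exists>l s. y = In l (canon_pos x a l) s \<and> 1 \<le> l \<and> l \<le> 2 * k \<and> s \<le> weight a (l - 1))"

lemma visits_Suc:
  assumes "l < 2 * k" "j < k"
  shows "visits (l + 1) j = visits l j + (if j = l mod k then 1 else 0)"
proof (cases "l < k")
  case False
  hence "l mod k = l - k" using assms(1) by (simp add: le_mod_geq)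
  thus ?thesis using False assms unfolding visits_def by auto
qed (use assms in \<open>auto simp: visits_def\<close>)

lemma advance_canon_pos: "l < 2 * k \<Longrightarrow> advance l (canon_pos x a l) (weight a l) = canon_pos x a (l + 1)"
  unfolding advance_def canon_pos_def weight_def using mod_k_less[of l] visits_Suc[of l]
  by (auto simp: fun_eq_iff algebra_simps)

lemma canon_pos_in_box:
  assumes "x \<in> box T" "a \<in> box T"
  shows "canon_pos x a l \<in> box Q"
proof -
  have "x j + visits l j * a j < Q" if "j < k" for j
  proof -
    have "visits l j * a j \<le> 2 * a j" by (intro mult_right_mono) (auto simp: visits_def)
    moreover have "x j < T" "a j < T" using assms that box_less by blast+
    ultimately show ?thesis unfolding Q_def by linarith
  qed
  thus ?thesis unfolding box_def canon_pos_def by (auto simp: PiE_iff extensional_def)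
qed

lemma canon_pos_0: "x \<in> box T \<Longrightarrow> canon_pos x a 0 = x"
  unfolding canon_pos_def visits_def box_def by (auto simp: fun_eq_iff PiE_iff extensional_def)

lemma pot_canon_link:
  "pot a (Link l p (weight a l) i) = link_start_pot a l p (weight a l) + int i"
  using link_slack_eq_0_iff[of "weight a l" a l p] by (simp add: max_def)

lemma pot_first_link_vertex:
  assumes "t \<le> weight a l"
  shows "pot a (Link l p t 1) = pot a (Out l p t) + 1 \<longleftrightarrow> t = weight a l"
proof -
  have "pot a (Link l p t 1) = max (link_start_pot a l p t - 1) (link_end_pot a l p t - (int (link_len t) - 1))"
    by simp
  thus ?thesis
    using link_slack_eq_0_iff[OF assms, of p] pot_Out[of a l p t] by (auto simp: max_def simp del: pot.simps)
qed

lemma pot_last_link_vertex: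
  assumes "t < T" "weight a l < T"
  shows "pot a (Link l p t (link_len t - 1)) < pot a (In (l + 1) (advance l p t) t)"
  using link_pot_gain_lower[OF assms, of p] pot_In[of a l p t] link_len_minus_1[of t] by simp

text \<open>A step that raises the potential by one cannot leave the canonical path: on the spines the
  \<open>min\<close> in the potential stops the ascent at the weight \<open>a\<^sub>l\<close>, only the link of weight \<open>a\<^sub>l\<close> is
  traversed at unit speed, and links are never traversed backwards at unit speed.\<close>

lemma on_canon_path_step:
  assumes a: "a \<in> box T" and y: "on_canon_path x a y" "valid y" "valid y'"
    and arc: "arc y y' \<or> arc y' y" and up: "pot a y' = pot a y + 1"
  shows "on_canon_path x a y'"
proof -
  consider (Out) l s where "y = Out l (canon_pos x a l) s" "l < 2 * k" "s \<le> weight a l"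
    | (Link) l i where "y = Link l (canon_pos x a l) (weight a l) i" "l < 2 * k" "1 \<le> i"
        "i < link_len (weight a l)"
    | (In) l s where "y = In l (canon_pos x a l) s" "1 \<le> l" "l \<le> 2 * k" "s \<le> weight a (l - 1)"
    using y(1) unfolding on_canon_path_def by blast
  thus ?thesis
  proof cases
    case Out
    show ?thesis
    proof (cases y')
      case (Link l' p' t' i')
      with Out arc have y': "y' = Link l (canon_pos x a l) s 1" by auto
      hence "s = weight a l" using up Out pot_first_link_vertex by blast
      thus ?thesis using y' Out link_len_ge_3[of s] unfolding on_canon_path_def by auto
    qed (use Out arc up y(3) in \<open>auto simp: on_canon_path_def min_def split: if_splits\<close>)
  next
    case Link
    show ?thesis
    proof (cases y')
      case (Out l' p' s')
      with Link arc have "y' = Out l (canon_pos x a l) (weight a l)" "i = 1" by auto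
      thus ?thesis
        using up Link pot_canon_link[of a l "canon_pos x a l" i]
          pot_Out[of a l "canon_pos x a l" "weight a l"] by (simp del: pot.simps)
    next
      case (Link l' p' t' i')
      with \<open>y = Link l (canon_pos x a l) (weight a l) i\<close> arc
      have "y' = Link l (canon_pos x a l) (weight a l) (i + 1) \<or> y' = Link l (canon_pos x a l) (weight a l) (i - 1) \<and> i' + 1 = i"
        by auto
      thus ?thesis
        using up y(3) Link \<open>y = Link l (canon_pos x a l) (weight a l) i\<close>
          pot_canon_link[of a l "canon_pos x a l"] \<open>l < 2 * k\<close> \<open>1 \<le> i\<close>
        unfolding on_canon_path_def by auto
    next
      case (In l' p' s')
      with Link arc have "y' = In (l + 1) (canon_pos x a (l + 1)) (weight a l)"
        using advance_canon_pos by auto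
      thus ?thesis using Link unfolding on_canon_path_def by auto
    qed
  next
    case In
    show ?thesis
    proof (cases y')
      case (Link l0 p0 t0 i0)
      with In arc have y_In: "y = In (l0 + 1) (advance l0 p0 t0) t0" and i0: "i0 = link_len t0 - 1"
        by auto
      have "t0 < T" using y(3) Link by (simp add: link_ok_def)
      thus ?thesis
        using up y_In i0 Link pot_last_link_vertex[of t0 a l0 p0] weight_less[OF a] by simp
    qed (use In arc up y(3) in \<open>auto simp: on_canon_path_def min_def split: if_splits\<close>)
  qed
qed

lemma tight_walk_on_canon_path:
  assumes a: "a \<in> box T" and x: "x \<in> box T"
    and p: "p 0 = enc (Out 0 x 0)" "\<forall>i<m. edge (p i) (p (Suc i))"
    and up: "\<And>i. i \<le> m \<Longrightarrow> pot a (dec (p i)) = pot a (Out 0 x 0) + int i"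
  shows "i \<le> m \<Longrightarrow> on_canon_path x a (dec (p i))"
proof (induction i)
  case 0
  have "valid (Out 0 x 0)" using k_pos x box_T_subset_box_Q T_ge_2 by auto
  moreover have "on_canon_path x a (Out 0 x 0)"
    unfolding on_canon_path_def using canon_pos_0[OF x, of a] k_pos by force
  ultimately show ?case using p(1) by simp
next
  case (Suc i)
  have "edge (p i) (p (Suc i))" using p(2) Suc.prems by simp
  from edge_dec[OF this] show ?case
    using on_canon_path_step[OF a Suc.IH[OF Suc_leD[OF Suc.prems]]] up[of i] up[of "Suc i"] Suc.prems
    unfolding adj_def by simp
qed

definition tight_walk :: "(nat \<Rightarrow> nat) \<Rightarrow> vertex \<Rightarrow> vertex \<Rightarrow> bool" where
  "tight_walk a u v \<longleftrightarrow> valid u \<and> valid v \<and>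
     (\<exists>d. has_walk N edge d (enc u) (enc v) \<and> int d = pot a v - pot a u)"

lemma tight_walk_refl: "valid u \<Longrightarrow> tight_walk a u u"
  unfolding tight_walk_def using has_walk_0 enc_less_N by fastforce

lemma tight_walk_trans: "tight_walk a u v \<Longrightarrow> tight_walk a v w \<Longrightarrow> tight_walk a u w"
  unfolding tight_walk_def by (fastforce dest: has_walk_append)

lemma tight_walk_arc:
  "valid u \<Longrightarrow> valid v \<Longrightarrow> adj u v \<Longrightarrow> pot a v = pot a u + 1 \<Longrightarrow> tight_walk a u v"
  unfolding tight_walk_def using has_walk_1 edge_enc enc_less_N by fastforce

lemma tight_walk_out_spine:
  assumes "a \<in> box T" "l < 2 * k" "c \<in> box Q"
  shows "s \<le> weight a l \<Longrightarrow> tight_walk a (Out l c 0) (Out l c s)"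
proof (induction s)
  case 0 thus ?case using assms T_ge_2 by (intro tight_walk_refl) auto
next
  case (Suc s)
  have "Suc s < T" using Suc.prems weight_less[OF assms(1), of l] by simp
  hence "tight_walk a (Out l c s) (Out l c (Suc s))"
    using assms Suc.prems by (intro tight_walk_arc) (auto simp: adj_def min_def)
  thus ?case using Suc tight_walk_trans by simp
qed

lemma tight_walk_link:
  assumes "a \<in> box T" "link_ok l c (weight a l)"
  shows "1 \<le> i \<Longrightarrow> i < link_len (weight a l) \<Longrightarrow>
    tight_walk a (Out l c (weight a l)) (Link l c (weight a l) i)"
proof (induction i)
  case (Suc i)
  have out: "valid (Out l c (weight a l))" using assms by (auto simp: link_ok_def)
  show ?case
  proof (cases "i = 0")
    case True
    thus ?thesis
      using assms out pot_canon_link[of a l c 1] pot_Out[of a l c "weight a l"]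
        link_len_ge_3[of "weight a l"]
      by (intro tight_walk_arc) (auto simp: adj_def simp del: pot.simps)
  next
    case False
    have "tight_walk a (Link l c (weight a l) i) (Link l c (weight a l) (Suc i))"
      using assms False Suc.prems pot_canon_link[of a l c i] pot_canon_link[of a l c "Suc i"]
      by (intro tight_walk_arc) (auto simp: adj_def simp del: pot.simps)
    thus ?thesis using Suc False tight_walk_trans by simp
  qed
qed simp

lemma tight_walk_in_spine:
  assumes "a \<in> box T" "1 \<le> l" "l \<le> 2 * k" "c \<in> box Q"
  shows "s \<le> weight a (l - 1) \<Longrightarrow> tight_walk a (In l c s) (In l c 0)"
proof (induction s)
  case 0 thus ?case using assms T_ge_2 by (intro tight_walk_refl) auto
next
  case (Suc s)
  have "Suc s < T" using Suc.prems weight_less[OF assms(1), of "l - 1"] by simp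
  hence "tight_walk a (In l c (Suc s)) (In l c s)"
    using assms Suc.prems by (intro tight_walk_arc) (auto simp: adj_def min_def)
  thus ?case using Suc tight_walk_trans by simp
qed

lemma tight_walk_layer:
  assumes a: "a \<in> box T" and x: "x \<in> box T" and l: "l < 2 * k"
  shows "tight_walk a (Out l (canon_pos x a l) 0) (In (l + 1) (canon_pos x a (l + 1)) 0)"
proof -
  let ?c = "canon_pos x a l" and ?c' = "canon_pos x a (l + 1)" and ?w = "weight a l"
  have box: "?c \<in> box Q" "?c' \<in> box Q" using canon_pos_in_box[OF x a] by auto
  have adv: "advance l ?c ?w = ?c'" using advance_canon_pos[OF l] .
  have "advance l ?c ?w (l mod k) < Q" using box(2) adv box_less mod_k_less by simp
  hence link: "link_ok l ?c ?w"
    unfolding link_ok_def advance_def using l box weight_less[OF a] by simp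
  define i where "i = link_len ?w - 1"
  have i: "1 \<le> i" "i < link_len ?w" using link_len_ge_3[of ?w] unfolding i_def by auto
  have "pot a (In (l + 1) ?c' ?w) = pot a (Link l ?c ?w i) + 1"
    using pot_In[of a l ?c ?w] adv pot_canon_link[of a l ?c i] link_slack_eq_0_iff[of ?w a l ?c]
      link_len_minus_1[of ?w] unfolding i_def by (simp del: pot.simps)
  hence "tight_walk a (Link l ?c ?w i) (In (l + 1) ?c' ?w)"
    using link i l box weight_less[OF a] adv
    by (intro tight_walk_arc) (auto simp: adj_def i_def)
  moreover have "tight_walk a (Out l ?c 0) (Out l ?c ?w)"
    using tight_walk_out_spine[OF a l box(1)] by simp
  moreover have "tight_walk a (Out l ?c ?w) (Link l ?c ?w i)"
    using tight_walk_link[OF a link i] .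
  moreover have "tight_walk a (In (l + 1) ?c' ?w) (In (l + 1) ?c' 0)"
    using tight_walk_in_spine[OF a _ _ box(2), of "l + 1" ?w] l by simp
  ultimately show ?thesis using tight_walk_trans by blast
qed

lemma tight_walk_canon:
  assumes a: "a \<in> box T" and x: "x \<in> box T"
  shows "1 \<le> l \<Longrightarrow> l \<le> 2 * k \<Longrightarrow> tight_walk a (Out 0 x 0) (In l (canon_pos x a l) 0)"
proof (induction l)
  case (Suc l)
  show ?case
  proof (cases "l = 0")
    case True
    thus ?thesis using tight_walk_layer[OF a x, of 0] canon_pos_0[OF x] k_pos by simp
  next
    case False
    hence IH: "tight_walk a (Out 0 x 0) (In l (canon_pos x a l) 0)" using Suc by simp
    have "canon_pos x a l \<in> box Q" using canon_pos_in_box[OF x a] .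
    hence "tight_walk a (In l (canon_pos x a l) 0) (Out l (canon_pos x a l) 0)"
      using False Suc.prems T_ge_2 by (intro tight_walk_arc) (auto simp: adj_def)
    moreover have "tight_walk a (Out l (canon_pos x a l) 0) (In (Suc l) (canon_pos x a (Suc l)) 0)"
      using tight_walk_layer[OF a x, of l] Suc.prems by simp
    ultimately show ?thesis using IH tight_walk_trans by blast
  qed
qed simp

lemma canon_pos_determines_weights:
  assumes "x \<in> box T" "a \<in> box T" "a' \<in> box T" "k \<le> l" "canon_pos x a l = canon_pos x a' l"
  shows "a = a'"
proof (rule PiE_ext[OF assms(2,3)[unfolded box_def]])
  fix j assume "j \<in> {..<k}"
  moreover have "visits l j \<ge> 1" using \<open>j \<in> {..<k}\<close> assms(4) unfolding visits_def by auto
  ultimately show "a j = a' j" using fun_cong[OF assms(5), of j] unfolding canon_pos_def by simp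
qed

lemma canon_pos_determines_pair:
  assumes "x \<in> box T" "a \<in> box T" "x' \<in> box T" "a' \<in> box T" "l < k"
    "canon_pos x a (2 * k) = canon_pos x' a' (2 * k)" "canon_pos x a l = canon_pos x' a' l"
  shows "x = x' \<and> a = a'"
proof -
  have "x j = x' j \<and> a j = a' j" if j: "j < k" for j
  proof -
    have "visits (2 * k) j = 2" "visits l j = (if j < l then 1 else 0)"
      using j assms(5) unfolding visits_def by auto
    thus ?thesis using fun_cong[OF assms(6), of j] fun_cong[OF assms(7), of j] j
      unfolding canon_pos_def by (auto split: if_splits)
  qed
  thus ?thesis using assms(1-4) unfolding box_def by (auto intro: PiE_ext)
qed

lemma canon_hub_determines_pair:
  assumes box: "x \<in> box T" "a \<in> box T" "x' \<in> box T" "a' \<in> box T"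
    and y: "on_canon_path x a y" "on_canon_path x' a' y"
    and endpoint: "if k \<le> layer y then x = x' else canon_pos x a (2 * k) = canon_pos x' a' (2 * k)"
  shows "x = x' \<and> a = a'"
proof -
  have pos: "canon_pos x a (layer y) = canon_pos x' a' (layer y)"
    using y unfolding on_canon_path_def by auto
  show ?thesis
  proof (cases "k \<le> layer y")
    case True
    thus ?thesis using endpoint pos canon_pos_determines_weights[OF box(1,2,4)] by simp
  next
    case False
    thus ?thesis using endpoint pos canon_pos_determines_pair[OF box, of "layer y"] by simp
  qed
qed

lemma hub_on_canon_path:
  assumes S: "hub_labeling N edge S" and x: "x \<in> box T" and a: "a \<in> box T"
  shows "\<exists>w. w \<in> S (enc (Out 0 x 0)) \<and> w \<in> S (enc (In (2 * k) (canon_pos x a (2 * k)) 0)) \<and>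
    on_canon_path x a (dec w)"
proof -
  let ?X = "Out 0 x 0" and ?Z = "In (2 * k) (canon_pos x a (2 * k)) 0"
  have "tight_walk a ?X ?Z" using tight_walk_canon[OF a x, of "2 * k"] k_pos by simp
  then obtain d where valid: "valid ?X" "valid ?Z" and walk: "has_walk N edge d (enc ?X) (enc ?Z)"
    and gap: "int d = pot a (dec (enc ?Z)) - pot a (dec (enc ?X))"
    unfolding tight_walk_def by auto
  obtain w p m where w: "w \<in> S (enc ?X)" "w \<in> S (enc ?Z)"
    and p: "p 0 = enc ?X" "p m = w" "\<forall>i<m. edge (p i) (p (Suc i))"
    and up: "\<And>i. i \<le> m \<Longrightarrow> pot a (dec (p i)) = pot a (dec (enc ?X)) + int i"
    using hub_on_potential_geodesic[where f = "\<lambda>u. pot a (dec u)", OF pot_lipschitz[OF a] S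
        enc_less_N[OF valid(1)] enc_less_N[OF valid(2)] walk gap] by blast
  have "on_canon_path x a (dec (p m))"
    using tight_walk_on_canon_path[OF a x p(1,3), of m] up valid(1) by simp
  with w p(2) show ?thesis by blast
qed

text \<open>Each pair \<open>(x, a)\<close> is charged to its canonical hub \<open>h\<close>, paired with the endpoint whose label
  contains \<open>h\<close> and which, together with \<open>h\<close>, determines \<open>(x, a)\<close>.\<close>

lemma hub_labeling_size:
  assumes S: "hub_labeling N edge S"
  shows "card (box T \<times> box T) \<le> (\<Sum>v<N. card (S v))"
proof -
  define source where "source q = Out 0 (fst q) 0" for q :: "(nat \<Rightarrow> nat) \<times> (nat \<Rightarrow> nat)"
  define target where "target q = In (2 * k) (canon_pos (fst q) (snd q) (2 * k)) 0"
    for q :: "(nat \<Rightarrow> nat) \<times> (nat \<Rightarrow> nat)"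
  define hub where "hub q = (SOME w. w \<in> S (enc (source q)) \<and> w \<in> S (enc (target q)) \<and>
      on_canon_path (fst q) (snd q) (dec w))" for q
  define charge where "charge q =
      (if k \<le> layer (dec (hub q)) then enc (source q) else enc (target q), hub q)" for q
  have hub: "hub q \<in> S (enc (source q)) \<and> hub q \<in> S (enc (target q)) \<and>
      on_canon_path (fst q) (snd q) (dec (hub q))" if "q \<in> box T \<times> box T" for q
    unfolding hub_def source_def target_def
    by (rule someI_ex) (use hub_on_canon_path[OF S] that in \<open>cases q, auto\<close>)
  have valid: "valid (source q)" "valid (target q)" if "q \<in> box T \<times> box T" for q
    using that box_T_subset_box_Q k_pos T_ge_2 canon_pos_in_box[of "fst q" "snd q"]
    unfolding source_def target_def by (auto simp: mem_Times_iff)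
  have "charge ` (box T \<times> box T) \<subseteq> Sigma {..<N} S"
    using hub valid enc_less_N unfolding charge_def by auto
  moreover have "inj_on charge (box T \<times> box T)"
  proof (rule inj_onI)
    fix q q' assume q: "q \<in> box T \<times> box T" and q': "q' \<in> box T \<times> box T" and eq: "charge q = charge q'"
    obtain x a x' a' where qq: "q = (x, a)" "q' = (x', a')" by fastforce
    have same_hub: "hub q = hub q'" using eq unfolding charge_def by simp
    let ?y = "dec (hub q)"
    have "if k \<le> layer ?y then x = x' else canon_pos x a (2 * k) = canon_pos x' a' (2 * k)"
    proof (cases "k \<le> layer ?y")
      case True
      hence "enc (source q) = enc (source q')" using eq same_hub unfolding charge_def by simp
      thus ?thesis using True enc_inj[OF valid(1)[OF q] valid(1)[OF q']] qq unfolding source_def by simp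
    next
      case False
      hence "enc (target q) = enc (target q')" using eq same_hub unfolding charge_def by simp
      thus ?thesis using False enc_inj[OF valid(2)[OF q] valid(2)[OF q']] qq unfolding target_def by simp
    qed
    moreover have "x \<in> box T" "a \<in> box T" "x' \<in> box T" "a' \<in> box T" using q q' qq by auto
    moreover have "on_canon_path x a ?y" "on_canon_path x' a' ?y"
      using hub[OF q] hub[OF q'] qq same_hub by auto
    ultimately have "x = x' \<and> a = a'" using canon_hub_determines_pair by blast
    thus "q = q'" using qq by simp
  qed
  moreover have "\<forall>v<N. finite (S v)"
    using S unfolding hub_labeling_def by (auto intro: finite_subset)
  ultimately have "card (box T \<times> box T) \<le> card (Sigma {..<N} S)"
    by (intro card_inj_on_le) auto
  also have "\<dots> = (\<Sum>v<N. card (S v))"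
    using \<open>\<forall>v<N. finite (S v)\<close> by (subst card_SigmaI) auto
  finally show ?thesis .
qed

lemma card_box: "card (box b) = b ^ k"
  unfolding box_def by (simp add: card_PiE)

lemma N_bounds: "2 ^ (k * k) \<le> N" "N \<le> 2 ^ (k * k + 12 * k)"
proof -
  have T: "T = 2 ^ k" by (simp add: T_def)
  have four: "(4::nat) ^ k = 2 ^ (2 * k)" by (simp add: power_mult)
  have "((2::nat) ^ k)\<^sup>2 = 2 ^ (k * 2)" by (rule power_mult[symmetric])
  also have "\<dots> = 4 ^ k" by (simp only: mult.commute[of k 2] power_mult) simp
  finally have T2: "T\<^sup>2 = 4 ^ k" unfolding T .
  have Qk: "Q ^ k = 3 ^ k * 2 ^ (k * k)" unfolding Q_def T by (simp add: power_mult_distrib power_mult)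
  have W: "W = 4 * 4 ^ k + 4" unfolding W_def M_def T2 by simp
  have N: "N = (3 * L) * 3 ^ k * 2 ^ (k * k) * T * W" unfolding N_def Qk by (simp add: algebra_simps)
  have "1 \<le> (3 * L) * 3 ^ k * T * W" unfolding L_def T W by simp
  thus "2 ^ (k * k) \<le> N" unfolding N by simp
  have "2 * k + 1 \<le> (4::nat) ^ k"
    using k_pos by (induction k rule: dec_induct) simp_all
  hence "L \<le> 4 ^ k" unfolding L_def .
  moreover have "(3::nat) ^ k \<le> 4 ^ k" by (simp add: power_mono)
  moreover have "W \<le> 8 * 4 ^ k" unfolding W using one_le_power[of 4 k] by simp
  ultimately have "N \<le> (4 * 4 ^ k) * 4 ^ k * 2 ^ (k * k) * 2 ^ k * (8 * 4 ^ k)"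
    unfolding N T by (intro mult_mono) auto
  also have "\<dots> = 2 ^ (k * k + 7 * k + 5)"
  proof -
    have exponent: "k * k + 7 * k + 5 = k * k + k + 2 * k + 2 * k + 2 * k + 5" by simp
    show ?thesis unfolding exponent four power_add by simp
  qed
  also have "\<dots> \<le> 2 ^ (k * k + 12 * k)" using k_pos by (intro power_increasing) auto
  finally show "N \<le> 2 ^ (k * k + 12 * k)" .
qed

lemma N_pos: "0 < N"
  using N_bounds(1) by (metis le_trans not_le pos2 zero_less_power)

lemma k_le_N: "k \<le> N"
proof -
  have "k < 2 ^ k" by (rule less_exp)
  also have "(2::nat) ^ k \<le> 2 ^ (k * k)" using k_pos by (intro power_increasing) auto
  also have "\<dots> \<le> N" by (rule N_bounds(1))
  finally show ?thesis by simp
qed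

lemma sqrt_ln_N_ge: "real k / 2 \<le> sqrt (ln (real N))"
proof -
  have "real ((2::nat) ^ (k * k)) \<le> real N" using N_bounds(1) by (simp only: of_nat_le_iff)
  hence "2 powr real (k * k) \<le> real N" using powr_realpow[of "2::real" "k * k"] by simp
  hence "real (k * k) * ln 2 \<le> ln (real N)"
    using ln_le_cancel_iff[of "2 powr real (k * k)" "real N"] N_pos by (simp add: ln_powr)
  moreover have "(real k / 2)\<^sup>2 \<le> real (k * k) * ln 2"
  proof -
    have "(real k / 2)\<^sup>2 = real (k * k) * (1 / 4)" by (simp add: power2_eq_square)
    also have "\<dots> \<le> real (k * k) * ln 2"
      using ln2_ge_two_thirds by (intro mult_left_mono) simp_all
    finally show ?thesis .
  qed
  ultimately show ?thesis by (metis order_trans real_sqrt_le_mono real_sqrt_abs abs_of_nonneg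
      divide_nonneg_pos of_nat_0_le_iff zero_less_numeral)
qed

lemma average_hub_size:
  assumes "hub_labeling N edge S"
  shows "real N / 2 powr (100 * sqrt (ln (real N))) \<le> (\<Sum>v<N. real (card (S v))) / real N"
proof -
  define s where "s = (\<Sum>v<N. real (card (S v)))"
  have "real (T ^ k * T ^ k) \<le> s"
    using hub_labeling_size[OF assms] unfolding s_def card_cartesian_product card_box
    by (metis of_nat_le_iff of_nat_sum)
  moreover have "T ^ k * T ^ k = (2::nat) ^ (2 * (k * k))"
    unfolding T_def by (simp add: power_mult[symmetric] power_add[symmetric] mult_2)
  ultimately have "real ((2::nat) ^ (2 * (k * k))) \<le> s" by simp
  hence s: "2 powr real (2 * (k * k)) \<le> s" using powr_realpow[of "2::real" "2 * (k * k)"] by simp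
  have "real N \<le> real ((2::nat) ^ (k * k + 12 * k))" using N_bounds(2) by (simp only: of_nat_le_iff)
  hence "real N \<le> 2 powr real (k * k + 12 * k)" using powr_realpow[of "2::real" "k * k + 12 * k"] by simp
  hence "real N * real N \<le> 2 powr real (k * k + 12 * k) * 2 powr real (k * k + 12 * k)"
    by (intro mult_mono) auto
  also have "\<dots> = 2 powr real (2 * (k * k)) * 2 powr (24 * real k)"
    unfolding powr_add[symmetric] by (simp add: algebra_simps)
  also have "\<dots> \<le> s * 2 powr (100 * sqrt (ln (real N)))"
  proof (rule mult_mono)
    show "2 powr (24 * real k) \<le> 2 powr (100 * sqrt (ln (real N)))"
      using sqrt_ln_N_ge by simp
  qed (use s in \<open>auto simp: s_def sum_nonneg\<close>)
  finally have "real N * real N \<le> s * 2 powr (100 * sqrt (ln (real N)))" .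
  moreover have "real N > 0" using N_pos by simp
  ultimately show ?thesis unfolding s_def[symmetric] by (simp add: field_simps)
qed

end

lemma large_graphs_with_large_hub_labelings:
  "\<exists>n\<ge>m. n > 0 \<and>
     (\<exists>E. simple_graph n E \<and> max_degree n E = 3 \<and>
        (\<forall>S. hub_labeling n E S \<longrightarrow>
           (\<Sum>v<n. real (card (S v))) / real n \<ge> real n / 2 powr (100 * sqrt (ln (real n)))))"
proof -
  interpret layered_graph "Suc m" by unfold_locales simp
  have "m \<le> N" using k_le_N by simp
  with N_pos simple_graph_edge max_degree_edge average_hub_size show ?thesis by blast
qed

theorem theorem1:
  shows "\<exists>C::real. C > 0 \<and>
    infinite {n::nat. n > 0 \<and>
      (\<exists>E. simple_graph n E \<and> max_degree n E = 3 \<and>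
         (\<forall>S. hub_labeling n E S \<longrightarrow>
            (\<Sum>v<n. real (card (S v))) / real n \<ge> real n / 2 powr (C * sqrt (ln (real n)))))}"
  unfolding infinite_nat_iff_unbounded_le mem_Collect_eq
  by (rule exI[of _ 100]) (simp add: large_graphs_with_large_hub_labelings)
end
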